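(* Let $\mathscr M$ be a module over $\mathbb Z[\mathbb L]_{\mathrm{loc}}=\mathbb Z[\mathbb L,\mathbb L^{-1},(1-\mathbb L^n)^{-1},n\ge1]$ and let $\mathbf T$, $\mathbf U$ be disjoint tuples of variables. Then $$\mathscr M[[\mathbf T]]_{\mathrm{int}}[[\mathbf U]]_{\mathrm{int}}\subset\mathscr M[[\mathbf T,\mathbf U]]_{\mathrm{int}}\subset\mathscr M[[\mathbf T]]_{\mathrm{int}}[[\mathbf U]],$$ where $\mathscr M[[\mathbf T]]_{\mathrm{int}}[[\mathbf U]]$ is the set of formal power series in $\mathbf U$ with coefficients in $\mathscr M[[\mathbf T]]_{\mathrm{int}}$, and $\mathscr M[[\mathbf T]]_{\mathrm{int}}[[\mathbf U]]_{\mathrm{int}}$ is the set of integrable series in $\mathbf U$ over the module $\mathscr M[[\mathbf T]]_{\mathrm{int}}$.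
   Context: For a module $\mathscr M$ over $\mathbb Z[\mathbb L,\mathbb L^{-1}]$ and variables $\mathbf T=(T_1,\dots,T_r)$, $\mathscr M[[\mathbf T]]_{\mathrm{int}}=\mathscr M[\mathbf T][(1-\mathbb L^m\mathbf T^{\mathbf n})^{-1}]_{m\in\mathbb Z_{<0},\,\mathbf n\in\mathbb N^r\setminus\{0\}}$, regarded as a submodule of $\mathscr M[[\mathbf T]]$ via geometric series expansion. *)

theory Defs
  imports Complex_Main "HOL-Library.Function_Algebras"
begin

text \<open>Formal power series in a tuple of variables indexed by a finite type 'v:
  a series with coefficients in 'm is a function from exponent vectors
  ('v \<Rightarrow> nat) to 'm.\<close>

type_synonym ('v, 'm) fseries = "('v \<Rightarrow> nat) \<Rightarrow> 'm"

definition Lpow :: "'r::comm_ring_1 \<Rightarrow> 'r \<Rightarrow> int \<Rightarrow> 'r" where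
  "Lpow L Linv z = (if 0 \<le> z then L ^ nat z else Linv ^ nat (- z))"

definition is_poly :: "('v, 'm::zero) fseries \<Rightarrow> bool" where
  "is_poly f \<longleftrightarrow> finite {n. f n \<noteq> 0}"

definition one_series :: "('v, 'r::{zero,one}) fseries" where
  "one_series n = (if n = (\<lambda>_. 0) then 1 else 0)"

text \<open>Geometric series expansion of (1 - L^m T^v)^{-1} = sum_k L^(m k) T^(k v).\<close>
definition geom :: "'r::comm_ring_1 \<Rightarrow> 'r \<Rightarrow> int \<Rightarrow> ('v \<Rightarrow> nat) \<Rightarrow> ('v, 'r) fseries" where
  "geom L Linv m v w =
     (if \<exists>k. w = (\<lambda>i. k * v i)
      then Lpow L Linv (m * int (THE k. w = (\<lambda>i. k * v i))) else 0)"

definition rmul :: "('v, 'r::comm_ring_1) fseries \<Rightarrow> ('v, 'r) fseries \<Rightarrow> ('v, 'r) fseries" where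
  "rmul A B c = (\<Sum>p\<in>{(a, b). \<forall>i. a i + b i = c i}. A (fst p) * B (snd p))"

definition smul :: "('r \<Rightarrow> 'm \<Rightarrow> 'm) \<Rightarrow> ('v, 'r) fseries \<Rightarrow> ('v, 'm::comm_monoid_add) fseries
    \<Rightarrow> ('v, 'm) fseries" where
  "smul scale A F c = (\<Sum>p\<in>{(a, b). \<forall>i. a i + b i = c i}. scale (A (fst p)) (F (snd p)))"

text \<open>Integrable series over a submodule N of a module 'm (scalar action scale):
  the image of N[T][(1 - L^m T^n)^{-1}] (m < 0, n \<noteq> 0) in N[[T]] via geometric
  series expansion, i.e. series of the form (prod_i (1 - L^m_i T^n_i)^{-1}) * f with f a
  polynomial with coefficients in N.\<close>
definition int_series ::
  "('r::comm_ring_1 \<Rightarrow> 'm::comm_monoid_add \<Rightarrow> 'm) \<Rightarrow> 'r \<Rightarrow> 'r \<Rightarrow> 'm set \<Rightarrow> ('v, 'm) fseries set" where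
  "int_series scale L Linv N =
     {F. \<exists>ps f. (\<forall>(m, v) \<in> set ps. m < 0 \<and> v \<noteq> (\<lambda>_. 0)) \<and> is_poly f \<and> (\<forall>n. f n \<in> N) \<and>
          F = smul scale (foldr (\<lambda>(m, v) acc. rmul (geom L Linv m v) acc) ps one_series) f}"

definition series_scale :: "('r \<Rightarrow> 'm \<Rightarrow> 'm) \<Rightarrow> 'r \<Rightarrow> ('v, 'm) fseries \<Rightarrow> ('v, 'm) fseries" where
  "series_scale scale r F = (\<lambda>n. scale r (F n))"

text \<open>Identification of series in (T,U) (variables indexed by 'a + 'b) with series in U
  whose coefficients are series in T.\<close>
definition flatten :: "('b, ('a, 'm) fseries) fseries \<Rightarrow> ('a + 'b, 'm) fseries" where
  "flatten G e = G (e \<circ> Inr) (e \<circ> Inl)"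

definition unflatten :: "('a + 'b, 'm) fseries \<Rightarrow> ('b, ('a, 'm) fseries) fseries" where
  "unflatten F u t = F (case_sum t u)"

end

theory Submission
  imports Defs "HOL-Library.FuncSet"
begin

text \<open>An integrable series is a polynomial times a product of geometric series
  \<open>(1 - L\<^sup>m T\<^sup>v)\<inverse>\<close> with \<open>m < 0\<close>, \<open>v \<noteq> 0\<close>. Such series are closed under sums (pass to a common
  denominator, using that \<open>1 - L\<^sup>m T\<^sup>v\<close> is a formal inverse of the expansion) and under renaming
  of variables.

  For the first inclusion, clear the \<open>U\<close>-denominators of a series with \<open>T\<close>-integrable coefficients:
  what remains is a finite sum of monomials \<open>U\<^sup>u\<close> times \<open>T\<close>-integrable series, each of which is
  integrable in \<open>(T, U)\<close>. For the second, split the denominator of a \<open>(T, U)\<close>-integrable series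
  into the factors involving only \<open>T\<close> and the others. Each of the others has finitely many terms of
  any given \<open>U\<close>-degree, so after moving them into the numerator every \<open>U\<close>-coefficient is a
  polynomial in \<open>T\<close> over the pure-\<open>T\<close> denominator.\<close>

section \<open>Cauchy products\<close>

lemma sum_fun_apply: "(sum f A) x = (\<Sum>a\<in>A. f a x)"
  by (induct A rule: infinite_finite_induct) auto

abbreviation antidiag :: "('v \<Rightarrow> nat) \<Rightarrow> (('v \<Rightarrow> nat) \<times> ('v \<Rightarrow> nat)) set" where
  "antidiag c \<equiv> {(a, b). \<forall>i. a i + b i = c i}"

lemma finite_le_fun: "finite {a :: 'v::finite \<Rightarrow> nat. a \<le> c}"
proof -
  have "finite (\<Pi>\<^sub>E i \<in> (UNIV::'v set). {..c i})"
    by (rule finite_PiE) auto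
  then show ?thesis
    by (rule finite_subset[rotated]) (auto simp: le_fun_def PiE_iff)
qed

lemma finite_antidiag: "finite (antidiag (c :: 'v::finite \<Rightarrow> nat))"
proof -
  have "antidiag c \<subseteq> {a. a \<le> c} \<times> {a. a \<le> c}"
    by (auto simp: le_fun_def) (metis le_add1, metis le_add2)
  then show ?thesis
    using finite_le_fun[of c] by (meson finite_SigmaI finite_subset)
qed

lemma sum_antidiag_swap: "(\<Sum>p\<in>antidiag c. h p) = (\<Sum>p\<in>antidiag c. h (snd p, fst p))"
  by (rule sum.reindex_bij_witness[where i="\<lambda>p. (snd p, fst p)" and j="\<lambda>p. (snd p, fst p)"])
     (auto simp: add.commute)

lemma sum_antidiag_assoc:
  fixes h :: "('v::finite \<Rightarrow> nat) \<Rightarrow> ('v \<Rightarrow> nat) \<Rightarrow> ('v \<Rightarrow> nat) \<Rightarrow> 'm::comm_monoid_add"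
  shows "(\<Sum>p\<in>antidiag c. \<Sum>q\<in>antidiag (fst p). h (fst q) (snd q) (snd p))
       = (\<Sum>p\<in>antidiag c. \<Sum>q\<in>antidiag (snd p). h (fst p) (fst q) (snd q))"
proof -
  have "(\<Sum>p\<in>antidiag c. \<Sum>q\<in>antidiag (fst p). h (fst q) (snd q) (snd p))
      = (\<Sum>x\<in>Sigma (antidiag c) (\<lambda>p. antidiag (fst p)). h (fst (snd x)) (snd (snd x)) (snd (fst x)))"
    by (subst sum.Sigma) (simp_all add: finite_antidiag prod.case_eq_if)
  also have "\<dots> = (\<Sum>x\<in>Sigma (antidiag c) (\<lambda>p. antidiag (snd p)). h (fst (fst x)) (fst (snd x)) (snd (snd x)))"
    by (rule sum.reindex_bij_witness[where
          i="\<lambda>x. ((fst (fst x) + fst (snd x), snd (snd x)), (fst (fst x), fst (snd x)))"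
      and j="\<lambda>x. ((fst (snd x), snd (snd x) + snd (fst x)), (snd (snd x), snd (fst x)))"])
       (auto simp: add.assoc[symmetric] fun_eq_iff, metis add.assoc)
  also have "\<dots> = (\<Sum>p\<in>antidiag c. \<Sum>q\<in>antidiag (snd p). h (fst p) (fst q) (snd q))"
    by (subst sum.Sigma) (simp_all add: finite_antidiag prod.case_eq_if)
  finally show ?thesis .
qed

lemma sum_antidiag_delta:
  fixes w :: "'v::finite \<Rightarrow> nat"
  shows "(\<Sum>p\<in>antidiag c. if fst p = w then h (snd p) else (0::'m::comm_monoid_add))
         = (if w \<le> c then h (c - w) else 0)"
proof -
  have "{p \<in> antidiag c. fst p = w} = (if w \<le> c then {(w, c - w)} else {})"
    by (auto simp: le_fun_def fun_eq_iff) (metis add_diff_cancel_left', metis le_add1)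
  then show ?thesis
    by (simp add: sum.inter_filter[OF finite_antidiag, symmetric])
qed

lemma module_mult: "module ((*) :: 'r::comm_ring_1 \<Rightarrow> 'r \<Rightarrow> 'r)"
  by standard (simp_all add: algebra_simps)

lemma rmul_eq_smul: "rmul = smul (*)"
  unfolding rmul_def smul_def ..

lemma rmul_commute: "rmul A B = rmul B (A :: ('v, 'r::comm_ring_1) fseries)"
  unfolding rmul_def fun_eq_iff by (subst sum_antidiag_swap) (simp add: mult.commute)

lemma smul_rmul:
  fixes A B :: "('v::finite, 'r::comm_ring_1) fseries"
  assumes "module scale"
  shows "smul scale (rmul A B) F = smul scale A (smul scale B F)"
proof
  interpret module scale by fact
  fix c
  have "smul scale (rmul A B) F c = (\<Sum>p\<in>antidiag c. \<Sum>q\<in>antidiag (fst p).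
          scale (A (fst q)) (scale (B (snd q)) (F (snd p))))"
    unfolding smul_def rmul_def by (simp add: scale_sum_left)
  also have "\<dots> = (\<Sum>p\<in>antidiag c. \<Sum>q\<in>antidiag (snd p).
          scale (A (fst p)) (scale (B (fst q)) (F (snd q))))"
    by (rule sum_antidiag_assoc)
  also have "\<dots> = smul scale A (smul scale B F) c"
    unfolding smul_def by (simp add: scale_sum_right)
  finally show "smul scale (rmul A B) F c = smul scale A (smul scale B F) c" .
qed

lemma rmul_assoc:
  fixes A B C :: "('v::finite, 'r::comm_ring_1) fseries"
  shows "rmul (rmul A B) C = rmul A (rmul B C)"
  using smul_rmul[OF module_mult] by (simp add: rmul_eq_smul)

lemma rmul_left_commute:
  fixes A B C :: "('v::finite, 'r::comm_ring_1) fseries"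
  shows "rmul A (rmul B C) = rmul B (rmul A C)"
  by (metis rmul_assoc rmul_commute)

definition monomial :: "('v \<Rightarrow> nat) \<Rightarrow> ('v, 'r::{zero,one}) fseries" where
  "monomial w e = (if e = w then 1 else 0)"

lemma one_series_eq_monomial: "one_series = monomial (\<lambda>_. 0)"
  by (simp add: one_series_def monomial_def fun_eq_iff)

lemma smul_monomial:
  fixes w :: "'v::finite \<Rightarrow> nat"
  assumes "module scale"
  shows "smul scale (monomial w) F c = (if w \<le> c then F (c - w) else 0)"
proof -
  interpret module scale by fact
  have "smul scale (monomial w) F c = (\<Sum>p\<in>antidiag c. if fst p = w then F (snd p) else 0)"
    unfolding smul_def monomial_def by (rule sum.cong) auto
  then show ?thesis by (simp add: sum_antidiag_delta)
qed

lemma smul_one_series: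
  fixes F :: "('v::finite, 'm::ab_group_add) fseries"
  assumes "module scale"
  shows "smul scale one_series F = F"
proof
  fix c :: "'v \<Rightarrow> nat"
  have "smul scale one_series F c = F (c - (\<lambda>_. 0))"
    using smul_monomial[OF assms, of "\<lambda>_. 0" F c] by (simp add: one_series_eq_monomial le_fun_def)
  moreover have "c - (\<lambda>_. 0) = c" by (simp add: fun_eq_iff)
  ultimately show "smul scale one_series F c = F c" by simp
qed

lemma rmul_one_series: "rmul one_series A = (A :: ('v::finite, 'r::comm_ring_1) fseries)"
  using smul_one_series[OF module_mult] by (simp add: rmul_eq_smul)

lemma rmul_one_series_right: "rmul A one_series = (A :: ('v::finite, 'r::comm_ring_1) fseries)"
  by (metis rmul_commute rmul_one_series)

lemma smul_add:
  assumes "module scale"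
  shows "smul scale A (F + G) = smul scale A F + smul scale A G"
proof -
  interpret module scale by fact
  show ?thesis unfolding smul_def by (simp add: fun_eq_iff scale_right_distrib sum.distrib)
qed

lemma smul_zero:
  assumes "module scale"
  shows "smul scale A 0 = 0"
proof -
  interpret module scale by fact
  show ?thesis unfolding smul_def by (simp add: fun_eq_iff)
qed

lemma smul_coeff_nonzero:
  assumes "module scale" and "smul scale A F c \<noteq> 0"
  obtains a b where "A a \<noteq> 0" "F b \<noteq> 0" "c = a + b"
proof -
  interpret module scale by fact
  obtain p where "p \<in> antidiag c" "scale (A (fst p)) (F (snd p)) \<noteq> 0"
    using assms(2) sum.not_neutral_contains_not_neutral unfolding smul_def by blast
  then show ?thesis
    by (intro that[of "fst p" "snd p"]) (auto simp: fun_eq_iff)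
qed

lemma is_poly_smul:
  fixes A :: "('v::finite, 'r::comm_ring_1) fseries"
  assumes "module scale" "is_poly A" "is_poly F"
  shows "is_poly (smul scale A F)"
proof -
  have "{c. smul scale A F c \<noteq> 0} \<subseteq> (\<lambda>(a, b). a + b) ` ({a. A a \<noteq> 0} \<times> {b. F b \<noteq> 0})"
    by (auto elim!: smul_coeff_nonzero[OF assms(1)])
  moreover have "finite ((\<lambda>(a, b). a + b) ` ({a. A a \<noteq> 0} \<times> {b. F b \<noteq> 0}))"
    using assms(2,3) unfolding is_poly_def by blast
  ultimately show ?thesis
    unfolding is_poly_def by (rule finite_subset)
qed

lemma is_poly_rmul:
  fixes A B :: "('v::finite, 'r::comm_ring_1) fseries"
  shows "is_poly A \<Longrightarrow> is_poly B \<Longrightarrow> is_poly (rmul A B)"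
  unfolding rmul_eq_smul by (rule is_poly_smul[OF module_mult])

lemma is_poly_monomial: "is_poly (monomial w)"
  unfolding is_poly_def monomial_def by (rule finite_subset[of _ "{w}"]) auto

lemma is_poly_add: "is_poly (F :: ('v, 'm::monoid_add) fseries) \<Longrightarrow> is_poly G \<Longrightarrow> is_poly (F + G)"
  unfolding is_poly_def by (rule finite_subset[of _ "{n. F n \<noteq> 0} \<union> {n. G n \<noteq> 0}"]) auto

section \<open>Geometric series and their inverses\<close>

definition admissible :: "(int \<times> ('v \<Rightarrow> nat)) list \<Rightarrow> bool" where
  "admissible ps \<longleftrightarrow> (\<forall>(m, v) \<in> set ps. m < 0 \<and> v \<noteq> (\<lambda>_. 0))"

definition geom_prod :: "'r::comm_ring_1 \<Rightarrow> 'r \<Rightarrow> (int \<times> ('v \<Rightarrow> nat)) list \<Rightarrow> ('v, 'r) fseries" where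
  "geom_prod L Linv ps = foldr (\<lambda>(m, v) acc. rmul (geom L Linv m v) acc) ps one_series"

definition geom_denom :: "'r::comm_ring_1 \<Rightarrow> 'r \<Rightarrow> int \<Rightarrow> ('v \<Rightarrow> nat) \<Rightarrow> ('v, 'r) fseries" where
  "geom_denom L Linv m v e = one_series e - (if e = v then Lpow L Linv m else 0)"

definition denom_prod :: "'r::comm_ring_1 \<Rightarrow> 'r \<Rightarrow> (int \<times> ('v \<Rightarrow> nat)) list \<Rightarrow> ('v, 'r) fseries" where
  "denom_prod L Linv ps = foldr (\<lambda>(m, v) acc. rmul (geom_denom L Linv m v) acc) ps one_series"

lemma admissible_simps [simp]:
  "admissible []"
  "admissible ((m, v) # ps) \<longleftrightarrow> m < 0 \<and> v \<noteq> (\<lambda>_. 0) \<and> admissible ps"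
  by (simp_all add: admissible_def)

lemma admissible_append [simp]: "admissible (ps @ qs) \<longleftrightarrow> admissible ps \<and> admissible qs"
  by (auto simp: admissible_def)

lemma geom_prod_simps [simp]:
  "geom_prod L Linv [] = one_series"
  "geom_prod L Linv ((m, v) # ps) = rmul (geom L Linv m v) (geom_prod L Linv ps)"
  by (simp_all add: geom_prod_def)

lemma denom_prod_simps [simp]:
  "denom_prod L Linv [] = one_series"
  "denom_prod L Linv ((m, v) # ps) = rmul (geom_denom L Linv m v) (denom_prod L Linv ps)"
  by (simp_all add: denom_prod_def)

lemma geom_multiple:
  assumes "v \<noteq> (\<lambda>_. 0)"
  shows "geom L Linv m v (\<lambda>i. k * v i) = Lpow L Linv (m * int k)"
proof -
  have "(THE k'. (\<lambda>i. k * v i) = (\<lambda>i. k' * v i)) = k"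
    using assms by (intro the_equality) (auto simp: fun_eq_iff)
  then show ?thesis by (auto simp: geom_def)
qed

lemma geom_not_multiple: "\<not> (\<exists>k. w = (\<lambda>i. k * v i)) \<Longrightarrow> geom L Linv m v w = 0"
  by (simp add: geom_def)

lemma geom_below:
  assumes "v \<noteq> (\<lambda>_. 0)" "\<not> v \<le> c"
  shows "geom L Linv m v c = one_series c"
proof (cases "\<exists>k. c = (\<lambda>i. k * v i)")
  case True
  then obtain k where k: "c = (\<lambda>i. k * v i)" by blast
  with assms(2) have "k = 0" by (auto simp: le_fun_def)
  with k show ?thesis
    using geom_multiple[OF assms(1), of L Linv m 0] by (simp add: one_series_def Lpow_def)
next
  case False
  then have "c \<noteq> (\<lambda>_. 0)" by (metis mult_zero_left)
  with False show ?thesis by (simp add: geom_not_multiple one_series_def)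
qed

text \<open>The sign condition \<open>m < 0\<close> makes \<open>Lpow L Linv (m * k)\<close> an honest power of \<open>Linv\<close>, hence
  multiplicative in \<open>k\<close>, without using \<open>L * Linv = 1\<close>.\<close>

lemma Lpow_neg_mult:
  assumes "m < 0"
  shows "Lpow L Linv (m * int k) = Linv ^ (nat (- m) * k)"
proof (cases "k = 0")
  case False
  with assms have "\<not> 0 \<le> m * int k" by (simp add: mult_less_0_iff not_le)
  moreover have "nat (- (m * int k)) = nat (- m) * nat (int k)"
    using assms nat_mult_distrib[of "- m" "int k"] by simp
  ultimately show ?thesis by (simp add: Lpow_def)
qed (simp add: Lpow_def)

lemma geom_step:
  assumes "m < 0" "v \<noteq> (\<lambda>_. 0)" "v \<le> c"
  shows "geom L Linv m v c = Lpow L Linv m * geom L Linv m v (c - v)"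
proof (cases "\<exists>k. c - v = (\<lambda>i. k * v i)")
  case True
  then obtain k where k: "c - v = (\<lambda>i. k * v i)" by blast
  with assms(3) have c: "c = (\<lambda>i. Suc k * v i)"
    by (auto simp: fun_eq_iff le_fun_def) (metis add.commute le_add_diff_inverse)
  have "geom L Linv m v c = Linv ^ (nat (- m) * Suc k)"
    unfolding c by (simp only: geom_multiple[OF assms(2)] Lpow_neg_mult[OF assms(1)])
  moreover have "geom L Linv m v (c - v) = Linv ^ (nat (- m) * k)"
    unfolding k by (simp only: geom_multiple[OF assms(2)] Lpow_neg_mult[OF assms(1)])
  moreover have "Lpow L Linv m = Linv ^ nat (- m)"
    using Lpow_neg_mult[OF assms(1), of L Linv 1] by simp
  ultimately show ?thesis by (simp add: power_add)
next
  case False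
  have "\<not> (\<exists>k. c = (\<lambda>i. k * v i))"
  proof
    assume "\<exists>k. c = (\<lambda>i. k * v i)"
    then obtain k where k: "c = (\<lambda>i. k * v i)" by blast
    with assms(2,3) have "k \<noteq> 0" by (auto simp: le_fun_def fun_eq_iff)
    with k have "c - v = (\<lambda>i. (k - 1) * v i)"
      by (auto simp: fun_eq_iff diff_mult_distrib)
    with False show False by blast
  qed
  with False show ?thesis by (simp add: geom_not_multiple)
qed

lemma rmul_geom_denom:
  fixes v :: "'v::finite \<Rightarrow> nat"
  shows "rmul (geom_denom L Linv m v) X c = X c - (if v \<le> c then Lpow L Linv m * X (c - v) else 0)"
proof -
  have "rmul (geom_denom L Linv m v) X c
     = (\<Sum>p\<in>antidiag c. (if fst p = (\<lambda>_. 0) then X (snd p) else 0)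
                       - (if fst p = v then Lpow L Linv m * X (snd p) else 0))"
    unfolding rmul_def geom_denom_def one_series_def by (rule sum.cong) (auto simp: algebra_simps)
  moreover have "c - (\<lambda>_. 0) = c" by (simp add: fun_eq_iff)
  ultimately show ?thesis
    by (simp add: sum_subtractf sum_antidiag_delta[where h=X]
        sum_antidiag_delta[where h="\<lambda>b. Lpow L Linv m * X b"] le_fun_def)
qed

lemma rmul_geom_denom_geom:
  fixes v :: "'v::finite \<Rightarrow> nat"
  assumes "m < 0" "v \<noteq> (\<lambda>_. 0)"
  shows "rmul (geom_denom L Linv m v) (geom L Linv m v) = one_series"
proof
  fix c
  show "rmul (geom_denom L Linv m v) (geom L Linv m v) c = one_series c"
  proof (cases "v \<le> c")
    case True
    have "c \<noteq> (\<lambda>_. 0)"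
    proof
      assume "c = (\<lambda>_. 0)"
      with True have "v = (\<lambda>_. 0)" by (auto simp: le_fun_def fun_eq_iff)
      with assms(2) show False ..
    qed
    with True assms show ?thesis by (simp add: rmul_geom_denom geom_step one_series_def)
  qed (simp add: rmul_geom_denom geom_below[OF assms(2)])
qed

lemma geom_prod_append:
  "geom_prod L Linv (ps @ qs) = rmul (geom_prod L Linv ps) (geom_prod L Linv (qs :: (int \<times> ('v::finite \<Rightarrow> nat)) list))"
  by (induct ps) (auto simp: rmul_one_series rmul_assoc)

lemma geom_prod_filter:
  "geom_prod L Linv (ps :: (int \<times> ('v::finite \<Rightarrow> nat)) list)
     = rmul (geom_prod L Linv (filter P ps)) (geom_prod L Linv (filter (\<lambda>x. \<not> P x) ps))"
proof (induct ps)
  case (Cons x ps)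
  then show ?case by (cases x) (simp add: rmul_assoc rmul_left_commute[of "geom L Linv _ _"])
qed (simp add: rmul_one_series)

lemma rmul_denom_prod_geom_prod:
  fixes ps :: "(int \<times> ('v::finite \<Rightarrow> nat)) list"
  assumes "admissible ps"
  shows "rmul (denom_prod L Linv ps) (geom_prod L Linv ps) = one_series"
  using assms
proof (induct ps)
  case (Cons x ps)
  obtain m v where x: "x = (m, v)" by (cases x)
  let ?P = "denom_prod L Linv ps" and ?G = "geom_prod L Linv ps"
  have "rmul (denom_prod L Linv (x # ps)) (geom_prod L Linv (x # ps))
      = rmul (rmul (geom_denom L Linv m v) (geom L Linv m v)) (rmul ?P ?G)"
    by (simp add: x rmul_assoc rmul_left_commute[of ?P])
  with Cons show ?case by (simp add: x rmul_geom_denom_geom rmul_one_series)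
qed (simp add: rmul_one_series)

lemma is_poly_denom_prod: "is_poly (denom_prod L Linv (ps :: (int \<times> ('v::finite \<Rightarrow> nat)) list))"
proof (induct ps)
  case Nil
  show ?case by (simp add: one_series_eq_monomial is_poly_monomial)
next
  case (Cons x ps)
  have "is_poly (geom_denom L Linv m v)" for m v
    unfolding is_poly_def geom_denom_def one_series_def
    by (rule finite_subset[of _ "{\<lambda>_. 0, v}"]) auto
  with Cons show ?case by (cases x) (auto intro: is_poly_rmul)
qed

section \<open>Integrable series\<close>

lemma int_series_iff:
  "F \<in> int_series scale L Linv N \<longleftrightarrow>
     (\<exists>ps f. admissible ps \<and> is_poly f \<and> (\<forall>n. f n \<in> N) \<and> F = smul scale (geom_prod L Linv ps) f)"
  unfolding int_series_def admissible_def geom_prod_def by auto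

lemma int_series_UNIV_iff:
  "F \<in> int_series scale L Linv UNIV \<longleftrightarrow>
     (\<exists>ps f. admissible ps \<and> is_poly f \<and> F = smul scale (geom_prod L Linv ps) f)"
  by (simp add: int_series_iff)

context
  fixes scale :: "'r::comm_ring_1 \<Rightarrow> 'm::ab_group_add \<Rightarrow> 'm" and L Linv :: 'r
  assumes module: "module scale"
begin

lemma zero_in_int_series: "(0 :: ('v::finite, 'm) fseries) \<in> int_series scale L Linv UNIV"
  unfolding int_series_UNIV_iff
  by (intro exI[of _ "[]"] exI[of _ 0]) (simp add: is_poly_def smul_one_series[OF module])

lemma smul_poly_in_int_series:
  fixes F :: "('v::finite, 'm) fseries"
  assumes "is_poly Q" "F \<in> int_series scale L Linv UNIV"
  shows "smul scale Q F \<in> int_series scale L Linv UNIV"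
proof -
  obtain ps f where ps: "admissible ps" "is_poly f" "F = smul scale (geom_prod L Linv ps) f"
    using assms(2) unfolding int_series_UNIV_iff by blast
  have "smul scale Q F = smul scale (geom_prod L Linv ps) (smul scale Q f)"
    by (simp only: ps(3) smul_rmul[OF module, symmetric] rmul_commute)
  moreover have "is_poly (smul scale Q f)"
    using module assms(1) ps(2) by (rule is_poly_smul)
  ultimately show ?thesis
    unfolding int_series_UNIV_iff using ps(1) by blast
qed

lemma smul_geom_prod_in_int_series:
  fixes F :: "('v::finite, 'm) fseries"
  assumes "admissible qs" "F \<in> int_series scale L Linv UNIV"
  shows "smul scale (geom_prod L Linv qs) F \<in> int_series scale L Linv UNIV"
proof -
  obtain ps f where ps: "admissible ps" "is_poly f" "F = smul scale (geom_prod L Linv ps) f"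
    using assms(2) unfolding int_series_UNIV_iff by blast
  have "smul scale (geom_prod L Linv qs) F = smul scale (geom_prod L Linv (qs @ ps)) f"
    by (simp only: ps(3) smul_rmul[OF module, symmetric] geom_prod_append)
  moreover have "admissible (qs @ ps)" using assms(1) ps(1) by simp
  ultimately show ?thesis
    unfolding int_series_UNIV_iff using ps(2) by blast
qed

lemma add_in_int_series:
  fixes F G :: "('v::finite, 'm) fseries"
  assumes F: "F \<in> int_series scale L Linv UNIV" and G: "G \<in> int_series scale L Linv UNIV"
  shows "F + G \<in> int_series scale L Linv UNIV"
proof -
  obtain ps f where ps: "admissible ps" "is_poly f" "F = smul scale (geom_prod L Linv ps) f"
    using F unfolding int_series_UNIV_iff by blast
  obtain qs g where qs: "admissible qs" "is_poly g" "G = smul scale (geom_prod L Linv qs) g"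
    using G unfolding int_series_UNIV_iff by blast
  let ?D = "geom_prod L Linv" and ?P = "denom_prod L Linv"
  have "rmul (?D (ps @ qs)) (?P qs) = ?D ps"
    by (simp add: geom_prod_append rmul_assoc rmul_commute[of "?D qs" "?P qs"]
        rmul_denom_prod_geom_prod qs(1) rmul_one_series_right)
  moreover have "rmul (?D (ps @ qs)) (?P ps) = ?D qs"
    by (simp add: geom_prod_append rmul_commute[of "?D ps" "?D qs"] rmul_assoc
        rmul_commute[of "?D ps" "?P ps"] rmul_denom_prod_geom_prod ps(1) rmul_one_series_right)
  ultimately have "F + G = smul scale (?D (ps @ qs)) (smul scale (?P qs) f + smul scale (?P ps) g)"
    by (simp only: smul_add[OF module] smul_rmul[OF module, symmetric] ps(3) qs(3))
  moreover have "is_poly (smul scale (?P qs) f + smul scale (?P ps) g)"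
    by (intro is_poly_add is_poly_smul[OF module] is_poly_denom_prod ps(2) qs(2))
  moreover have "admissible (ps @ qs)" using ps(1) qs(1) by simp
  ultimately show ?thesis
    unfolding int_series_UNIV_iff by blast
qed

lemma sum_in_int_series:
  fixes F :: "'x \<Rightarrow> ('v::finite, 'm) fseries"
  assumes "\<And>x. x \<in> S \<Longrightarrow> F x \<in> int_series scale L Linv UNIV"
  shows "sum F S \<in> int_series scale L Linv UNIV"
  using assms
proof (induct S rule: infinite_finite_induct)
  case (insert x S)
  then show ?case
    unfolding sum.insert[OF insert(1,2)] by (intro add_in_int_series) auto
qed (simp_all add: zero_in_int_series)

end

section \<open>Renaming variables\<close>

text \<open>\<open>subst_vars \<sigma> A\<close> renames each variable \<open>T i\<close> of \<open>A\<close> to \<open>T (\<sigma> i)\<close>; \<open>graft \<sigma> t e\<close> is the exponent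
  that equals \<open>t\<close> along \<open>\<sigma>\<close> and \<open>e\<close> off its range.\<close>

definition graft :: "('a \<Rightarrow> 'c) \<Rightarrow> ('a \<Rightarrow> nat) \<Rightarrow> ('c \<Rightarrow> nat) \<Rightarrow> 'c \<Rightarrow> nat" where
  "graft \<sigma> t e j = (if j \<in> range \<sigma> then t (inv \<sigma> j) else e j)"

definition subst_vars :: "('a \<Rightarrow> 'c) \<Rightarrow> ('a, 'x::zero) fseries \<Rightarrow> ('c, 'x) fseries" where
  "subst_vars \<sigma> A e = (if \<forall>j. j \<notin> range \<sigma> \<longrightarrow> e j = 0 then A (e \<circ> \<sigma>) else 0)"

lemma graft_comp: "inj \<sigma> \<Longrightarrow> graft \<sigma> t e \<circ> \<sigma> = t"
  by (simp add: graft_def fun_eq_iff)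

lemma graft_outside: "j \<notin> range \<sigma> \<Longrightarrow> graft \<sigma> t e j = e j"
  by (simp add: graft_def)

lemma graft_comp_self: "(\<And>j. j \<notin> range \<sigma> \<Longrightarrow> b j = e j) \<Longrightarrow> graft \<sigma> (b \<circ> \<sigma>) e = b"
  by (auto simp: graft_def fun_eq_iff f_inv_into_f)

lemma graft_mult: "graft \<sigma> (\<lambda>i. k * t i) (\<lambda>_. 0) = (\<lambda>j. k * graft \<sigma> t (\<lambda>_. 0) j)"
  by (simp add: graft_def fun_eq_iff)

lemma graft_Inl: "graft Inl t e = case_sum t (e \<circ> Inr)"
  by (auto simp: graft_def fun_eq_iff split: sum.split)

lemma graft_Inr: "graft Inr u e = case_sum (e \<circ> Inl) u"
  by (auto simp: graft_def fun_eq_iff split: sum.split)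

lemma subst_vars_graft:
  "inj \<sigma> \<Longrightarrow> subst_vars \<sigma> F (graft \<sigma> t e) = (if \<forall>j. j \<notin> range \<sigma> \<longrightarrow> e j = 0 then F t else 0)"
  by (auto simp: subst_vars_def graft_outside graft_comp)

lemma smul_subst_vars:
  fixes A :: "('a::finite, 'r::comm_ring_1) fseries" and H :: "('c::finite, 'm::ab_group_add) fseries"
  assumes "module scale" "inj \<sigma>"
  shows "smul scale (subst_vars \<sigma> A) H e = smul scale A (\<lambda>t. H (graft \<sigma> t e)) (e \<circ> \<sigma>)"
proof -
  interpret module scale by fact
  define h where "h q = (graft \<sigma> (fst q) (\<lambda>_. 0), graft \<sigma> (snd q) e)" for q
  define g where "g p = scale (subst_vars \<sigma> A (fst p)) (H (snd p))" for p
  have "inj h"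
    by (rule injI) (metis h_def graft_comp[OF assms(2)] prod.inject prod_eqI)
  have image: "h ` antidiag (e \<circ> \<sigma>) \<subseteq> antidiag e"
  proof
    fix x assume "x \<in> h ` antidiag (e \<circ> \<sigma>)"
    then obtain a b where x: "x = h (a, b)" and ab: "\<forall>i. a i + b i = e (\<sigma> i)" by auto
    have "graft \<sigma> a (\<lambda>_. 0) j + graft \<sigma> b e j = e j" for j
      using ab by (cases "j \<in> range \<sigma>") (auto simp: graft_def f_inv_into_f)
    then show "x \<in> antidiag e" by (simp add: x h_def)
  qed
  have outside: "g p = 0" if p: "p \<in> antidiag e - h ` antidiag (e \<circ> \<sigma>)" for p
  proof (cases "\<forall>j. j \<notin> range \<sigma> \<longrightarrow> fst p j = 0")
    case True
    obtain a b where ab: "p = (a, b)" "\<And>j. a j + b j = e j" using p by auto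
    with True have "p = h (a \<circ> \<sigma>, b \<circ> \<sigma>)"
      unfolding h_def by (auto intro!: graft_comp_self[symmetric]) (metis add_0)
    moreover have "(a \<circ> \<sigma>, b \<circ> \<sigma>) \<in> antidiag (e \<circ> \<sigma>)" using ab by simp
    ultimately show ?thesis using p by blast
  qed (auto simp: g_def subst_vars_def)
  have "smul scale (subst_vars \<sigma> A) H e = sum g (h ` antidiag (e \<circ> \<sigma>))"
    unfolding smul_def g_def[symmetric]
    by (rule sum.mono_neutral_right[OF finite_antidiag image]) (use outside in blast)
  also have "\<dots> = sum (g \<circ> h) (antidiag (e \<circ> \<sigma>))"
    by (rule sum.reindex) (use \<open>inj h\<close> in \<open>simp add: inj_on_def\<close>)
  also have "\<dots> = smul scale A (\<lambda>t. H (graft \<sigma> t e)) (e \<circ> \<sigma>)"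
    unfolding smul_def by (rule sum.cong) (simp_all add: g_def h_def subst_vars_graft[OF assms(2)])
  finally show ?thesis .
qed

lemma graft_eq_zero_iff: "inj \<sigma> \<Longrightarrow> graft \<sigma> v (\<lambda>_. 0) = (\<lambda>_. 0) \<longleftrightarrow> v = (\<lambda>_. 0)"
  by (metis (no_types, lifting) comp_apply graft_comp graft_def)

lemma subst_vars_smul:
  fixes A :: "('a::finite, 'r::comm_ring_1) fseries" and f :: "('a, 'm::ab_group_add) fseries"
    and \<sigma> :: "'a \<Rightarrow> 'c::finite"
  assumes "module scale" "inj \<sigma>"
  shows "subst_vars \<sigma> (smul scale A f) = smul scale (subst_vars \<sigma> A) (subst_vars \<sigma> f)"
proof
  fix e
  have "smul scale (subst_vars \<sigma> A) (subst_vars \<sigma> f) e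
      = smul scale A (\<lambda>t. subst_vars \<sigma> f (graft \<sigma> t e)) (e \<circ> \<sigma>)"
    by (rule smul_subst_vars[OF assms])
  also have "\<dots> = subst_vars \<sigma> (smul scale A f) e"
  proof (cases "\<forall>j. j \<notin> range \<sigma> \<longrightarrow> e j = 0")
    case True
    then have "(\<lambda>t. subst_vars \<sigma> f (graft \<sigma> t e)) = f"
      by (simp add: subst_vars_graft[OF assms(2)])
    with True show ?thesis by (simp add: subst_vars_def)
  next
    case False
    then have "(\<lambda>t. subst_vars \<sigma> f (graft \<sigma> t e)) = 0"
      by (auto simp: subst_vars_graft[OF assms(2)] fun_eq_iff)
    with False show ?thesis
      unfolding subst_vars_def[of \<sigma> "smul scale A f"] by (auto simp: smul_zero[OF assms(1)])
  qed
  finally show "subst_vars \<sigma> (smul scale A f) e = smul scale (subst_vars \<sigma> A) (subst_vars \<sigma> f) e" ..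
qed

lemma subst_vars_rmul:
  fixes A B :: "('a::finite, 'r::comm_ring_1) fseries" and \<sigma> :: "'a \<Rightarrow> 'c::finite"
  shows "inj \<sigma> \<Longrightarrow> subst_vars \<sigma> (rmul A B) = rmul (subst_vars \<sigma> A) (subst_vars \<sigma> B)"
  unfolding rmul_eq_smul by (rule subst_vars_smul[OF module_mult])

lemma subst_vars_one_series: "subst_vars (\<sigma> :: 'a \<Rightarrow> 'c) one_series = one_series"
proof
  fix e :: "'c \<Rightarrow> nat"
  have "e = (\<lambda>_. 0) \<longleftrightarrow> (\<forall>j. j \<notin> range \<sigma> \<longrightarrow> e j = 0) \<and> e \<circ> \<sigma> = (\<lambda>_. 0)"
    by (auto simp: fun_eq_iff) (metis rangeE)
  then show "subst_vars \<sigma> one_series e = one_series e"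
    by (auto simp: subst_vars_def one_series_def)
qed

lemma subst_vars_geom:
  assumes "inj \<sigma>" "v \<noteq> (\<lambda>_. 0)"
  shows "subst_vars \<sigma> (geom L Linv m v) = geom L Linv m (graft \<sigma> v (\<lambda>_. 0))"
proof
  fix e
  let ?v = "graft \<sigma> v (\<lambda>_. 0)"
  have "?v \<noteq> (\<lambda>_. 0)"
    using assms by (simp add: graft_eq_zero_iff)
  show "subst_vars \<sigma> (geom L Linv m v) e = geom L Linv m ?v e"
  proof (cases "(\<forall>j. j \<notin> range \<sigma> \<longrightarrow> e j = 0) \<and> (\<exists>k. e \<circ> \<sigma> = (\<lambda>i. k * v i))")
    case True
    then obtain k where k: "e \<circ> \<sigma> = (\<lambda>i. k * v i)" by blast
    with True have "e = (\<lambda>j. k * ?v j)"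
      by (metis graft_comp_self graft_mult)
    with k True show ?thesis
      by (simp add: subst_vars_def geom_multiple assms(2) \<open>?v \<noteq> (\<lambda>_. 0)\<close>)
  next
    case False
    have "\<not> (\<exists>k. e = (\<lambda>j. k * ?v j))"
    proof
      assume "\<exists>k. e = (\<lambda>j. k * ?v j)"
      then obtain k where "e = graft \<sigma> (\<lambda>i. k * v i) (\<lambda>_. 0)" by (auto simp: graft_mult)
      with False show False by (auto simp: graft_outside graft_comp[OF assms(1)])
    qed
    with False show ?thesis
      by (auto simp: subst_vars_def geom_not_multiple)
  qed
qed

lemma subst_vars_geom_prod:
  fixes ps :: "(int \<times> ('a::finite \<Rightarrow> nat)) list" and \<sigma> :: "'a \<Rightarrow> 'c::finite"
  assumes "inj \<sigma>" "admissible ps"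
  shows "subst_vars \<sigma> (geom_prod L Linv ps)
           = geom_prod L Linv (map (\<lambda>(m, v). (m, graft \<sigma> v (\<lambda>_. 0))) ps)"
  using assms(2)
  by (induct ps) (auto simp: subst_vars_one_series subst_vars_rmul subst_vars_geom assms(1))

lemma admissible_map_graft:
  assumes "inj \<sigma>" "admissible ps"
  shows "admissible (map (\<lambda>(m, v). (m, graft \<sigma> v (\<lambda>_. 0))) ps)"
  using assms(2) by (induct ps) (auto simp: graft_eq_zero_iff[OF assms(1)])

lemma is_poly_subst_vars:
  assumes "is_poly f"
  shows "is_poly (subst_vars \<sigma> f)"
proof -
  have "{e. subst_vars \<sigma> f e \<noteq> 0} \<subseteq> (\<lambda>t. graft \<sigma> t (\<lambda>_. 0)) ` {t. f t \<noteq> 0}"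
  proof
    fix e assume "e \<in> {e. subst_vars \<sigma> f e \<noteq> 0}"
    then have "\<forall>j. j \<notin> range \<sigma> \<longrightarrow> e j = 0" "f (e \<circ> \<sigma>) \<noteq> 0"
      by (auto simp: subst_vars_def split: if_splits)
    then show "e \<in> (\<lambda>t. graft \<sigma> t (\<lambda>_. 0)) ` {t. f t \<noteq> 0}"
      by (intro image_eqI[of _ _ "e \<circ> \<sigma>"]) (simp_all add: graft_comp_self)
  qed
  then show ?thesis
    using assms unfolding is_poly_def by (rule finite_surj[rotated])
qed

lemma subst_vars_in_int_series:
  fixes F :: "('a::finite, 'm::ab_group_add) fseries" and \<sigma> :: "'a \<Rightarrow> 'c::finite"
  assumes "module scale" "inj \<sigma>" "F \<in> int_series scale L Linv UNIV"
  shows "subst_vars \<sigma> F \<in> int_series scale L Linv UNIV"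
proof -
  obtain ps f where ps: "admissible ps" "is_poly f" "F = smul scale (geom_prod L Linv ps) f"
    using assms(3) unfolding int_series_UNIV_iff by blast
  let ?ps = "map (\<lambda>(m, v). (m, graft \<sigma> v (\<lambda>_. 0))) ps"
  have "subst_vars \<sigma> F = smul scale (geom_prod L Linv ?ps) (subst_vars \<sigma> f)"
    by (simp add: ps(3) subst_vars_smul[OF assms(1,2)] subst_vars_geom_prod[OF assms(2) ps(1)])
  moreover have "admissible ?ps" using assms(2) ps(1) by (rule admissible_map_graft)
  moreover have "is_poly (subst_vars \<sigma> f)" using ps(2) by (rule is_poly_subst_vars)
  ultimately show ?thesis
    unfolding int_series_UNIV_iff by blast
qed

section \<open>Flattening and unflattening\<close>

lemma notin_range_Inl: "j \<notin> range Inl \<longleftrightarrow> j \<in> range Inr"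
  by (cases j) auto

lemma subst_vars_Inl: "subst_vars Inl A e = (if e \<circ> Inr = (\<lambda>_. 0) then A (e \<circ> Inl) else 0)"
  by (auto simp: subst_vars_def notin_range_Inl fun_eq_iff)

lemma flatten_smul:
  fixes A :: "('b::finite, 'r::comm_ring_1) fseries"
    and g :: "('b, ('a::finite, 'm::ab_group_add) fseries) fseries"
  assumes "module scale"
  shows "flatten (smul (series_scale scale) A g) = smul scale (subst_vars Inr A) (flatten g)"
proof
  fix e :: "'a + 'b \<Rightarrow> nat"
  have "flatten (smul (series_scale scale) A g) e = smul scale A (\<lambda>u. g u (e \<circ> Inl)) (e \<circ> Inr)"
    by (simp add: flatten_def smul_def sum_fun_apply series_scale_def)
  also have "\<dots> = smul scale (subst_vars Inr A) (flatten g) e"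
    by (simp add: smul_subst_vars[OF assms] graft_Inr flatten_def case_sum_o_inj)
  finally show "flatten (smul (series_scale scale) A g) e = smul scale (subst_vars Inr A) (flatten g) e" .
qed

lemma smul_monomial_subst_vars_Inl:
  fixes G :: "('a::finite, 'm::ab_group_add) fseries" and u :: "'b::finite \<Rightarrow> nat"
  assumes "module scale"
  shows "smul scale (monomial (case_sum (\<lambda>_. 0) u)) (subst_vars Inl G) e
           = (if e \<circ> Inr = u then G (e \<circ> Inl) else 0)"
proof -
  have "case_sum (\<lambda>_. 0) u \<le> e \<longleftrightarrow> u \<le> e \<circ> Inr"
    by (auto simp: le_fun_def split: sum.split)
  moreover have "u \<le> e \<circ> Inr \<and> (e \<circ> Inr) - u = (\<lambda>_. 0) \<longleftrightarrow> e \<circ> Inr = u"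
    by (auto simp: le_fun_def fun_eq_iff intro: le_antisym)
  moreover have "(e - case_sum (\<lambda>_. 0) u) \<circ> Inl = e \<circ> Inl"
    and "(e - case_sum (\<lambda>_. 0) u) \<circ> Inr = (e \<circ> Inr) - u"
    by (simp_all add: fun_eq_iff)
  ultimately show ?thesis
    by (auto simp: smul_monomial[OF assms] subst_vars_Inl)
qed

lemma flatten_eq_sum:
  fixes g :: "('b::finite, ('a::finite, 'm::ab_group_add) fseries) fseries"
  assumes "module scale" "is_poly g"
  shows "flatten g = (\<Sum>u\<in>{u. g u \<noteq> 0}. smul scale (monomial (case_sum (\<lambda>_. 0) u)) (subst_vars Inl (g u)))"
proof
  fix e :: "'a + 'b \<Rightarrow> nat"
  have "finite {u. g u \<noteq> 0}" using assms(2) by (simp add: is_poly_def)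
  then show "flatten g e = (\<Sum>u\<in>{u. g u \<noteq> 0}. smul scale (monomial (case_sum (\<lambda>_. 0) u)) (subst_vars Inl (g u))) e"
    by (auto simp: sum_fun_apply smul_monomial_subst_vars_Inl[OF assms(1)] flatten_def sum.delta')
qed

lemma flatten_in_int_series:
  fixes G :: "('b::finite, ('a::finite, 'm::ab_group_add) fseries) fseries"
  assumes "module scale"
    and "G \<in> int_series (series_scale scale) L Linv (int_series scale L Linv UNIV)"
  shows "flatten G \<in> int_series scale L Linv UNIV"
proof -
  obtain qs g where qs: "admissible qs" "is_poly g" "\<forall>u. g u \<in> int_series scale L Linv UNIV"
      "G = smul (series_scale scale) (geom_prod L Linv qs) g"
    using assms(2) unfolding int_series_iff by blast
  let ?qs = "map (\<lambda>(m, v). (m, graft Inr v (\<lambda>_. 0))) qs"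
  have "flatten G = smul scale (geom_prod L Linv ?qs) (flatten g)"
    by (simp add: qs(4) flatten_smul[OF assms(1)] subst_vars_geom_prod[OF inj_Inr qs(1)])
  moreover have "flatten g \<in> int_series scale L Linv UNIV"
    unfolding flatten_eq_sum[OF assms(1) qs(2)]
    by (intro sum_in_int_series smul_poly_in_int_series subst_vars_in_int_series assms(1)
        is_poly_monomial inj_Inl qs(3)[rule_format])
  ultimately show ?thesis
    using smul_geom_prod_in_int_series[OF assms(1) admissible_map_graft[OF inj_Inr qs(1)]] by simp
qed

definition finite_fibres :: "('a + 'b, 'x::zero) fseries \<Rightarrow> bool" where
  "finite_fibres A \<longleftrightarrow> (\<forall>u. finite {e. A e \<noteq> 0 \<and> e \<circ> Inr = u})"

lemma finite_fibres_le:
  fixes A :: "('a + 'b::finite, 'x::zero) fseries"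
  assumes "finite_fibres A"
  shows "finite {e. A e \<noteq> 0 \<and> e \<circ> Inr \<le> u}"
proof -
  have "{e. A e \<noteq> 0 \<and> e \<circ> Inr \<le> u} = (\<Union>w\<in>{w. w \<le> u}. {e. A e \<noteq> 0 \<and> e \<circ> Inr = w})"
    by auto
  then show ?thesis
    using assms finite_le_fun[of u] unfolding finite_fibres_def by auto
qed

lemma finite_fibres_smul:
  fixes A :: "('a::finite + 'b::finite, 'r::comm_ring_1) fseries"
  assumes "module scale" "finite_fibres A" "finite_fibres F"
  shows "finite_fibres (smul scale A F)"
  unfolding finite_fibres_def
proof
  fix u :: "'b \<Rightarrow> nat"
  let ?SA = "{e. A e \<noteq> 0 \<and> e \<circ> Inr \<le> u}" and ?SF = "{e. F e \<noteq> 0 \<and> e \<circ> Inr \<le> u}"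
  have "{e. smul scale A F e \<noteq> 0 \<and> e \<circ> Inr = u} \<subseteq> (\<lambda>(a, b). a + b) ` (?SA \<times> ?SF)"
  proof
    fix c assume "c \<in> {e. smul scale A F e \<noteq> 0 \<and> e \<circ> Inr = u}"
    then obtain a b where "A a \<noteq> 0" "F b \<noteq> 0" "c = a + b" "u = c \<circ> Inr"
      by (auto elim: smul_coeff_nonzero[OF assms(1)])
    then show "c \<in> (\<lambda>(a, b). a + b) ` (?SA \<times> ?SF)"
      by (intro image_eqI[of _ _ "(a, b)"]) (auto simp: le_fun_def)
  qed
  moreover have "finite ((\<lambda>(a, b). a + b) ` (?SA \<times> ?SF))"
    using finite_fibres_le[OF assms(2)] finite_fibres_le[OF assms(3)] by blast
  ultimately show "finite {e. smul scale A F e \<noteq> 0 \<and> e \<circ> Inr = u}"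
    by (rule finite_subset)
qed

lemma is_poly_imp_finite_fibres: "is_poly f \<Longrightarrow> finite_fibres f"
  unfolding finite_fibres_def is_poly_def by (auto intro: finite_subset[rotated])

lemma finite_fibres_geom:
  assumes "v \<circ> Inr \<noteq> (\<lambda>_. 0)"
  shows "finite_fibres (geom L Linv m v)"
  unfolding finite_fibres_def
proof
  fix u
  obtain i where i: "v (Inr i) \<noteq> 0" using assms by (auto simp: fun_eq_iff)
  have "{e. geom L Linv m v e \<noteq> 0 \<and> e \<circ> Inr = u} \<subseteq> (\<lambda>k. (\<lambda>j. k * v j)) ` {..u i}"
  proof
    fix e assume e: "e \<in> {e. geom L Linv m v e \<noteq> 0 \<and> e \<circ> Inr = u}"
    then obtain k where k: "e = (\<lambda>j. k * v j)" using geom_not_multiple by blast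
    with e i show "e \<in> (\<lambda>k. (\<lambda>j. k * v j)) ` {..u i}" by auto
  qed
  then show "finite {e. geom L Linv m v e \<noteq> 0 \<and> e \<circ> Inr = u}"
    by (rule finite_subset) simp
qed

lemma finite_fibres_geom_prod:
  fixes ps :: "(int \<times> ('a::finite + 'b::finite \<Rightarrow> nat)) list"
  assumes "\<forall>(m, v) \<in> set ps. v \<circ> Inr \<noteq> (\<lambda>_. 0)"
  shows "finite_fibres (geom_prod L Linv ps)"
  using assms
proof (induct ps)
  case Nil
  show ?case by (simp add: is_poly_imp_finite_fibres one_series_eq_monomial is_poly_monomial)
next
  case (Cons x ps)
  obtain m v where x: "x = (m, v)" by (cases x)
  with Cons.prems have "v \<circ> Inr \<noteq> (\<lambda>_. 0)" "\<forall>(m, v) \<in> set ps. v \<circ> Inr \<noteq> (\<lambda>_. 0)"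
    by (auto simp: comp_def)
  then show ?case
    unfolding x geom_prod_simps rmul_eq_smul
    by (intro finite_fibres_smul[OF module_mult] finite_fibres_geom Cons.hyps[unfolded rmul_eq_smul])
qed

lemma is_poly_unflatten:
  assumes "finite_fibres H"
  shows "is_poly (unflatten H u)"
proof -
  have "{t. unflatten H u t \<noteq> 0} \<subseteq> (\<lambda>e. e \<circ> Inl) ` {e. H e \<noteq> 0 \<and> e \<circ> Inr = u}"
    by (auto simp: unflatten_def case_sum_o_inj intro!: image_eqI[where x="case_sum _ u"])
  then show ?thesis
    using assms unfolding is_poly_def finite_fibres_def by (meson finite_imageI finite_subset)
qed

lemma unflatten_smul_subst_vars_Inl:
  fixes A :: "('a::finite, 'r::comm_ring_1) fseries" and H :: "('a + 'b::finite, 'm::ab_group_add) fseries"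
  assumes "module scale"
  shows "unflatten (smul scale (subst_vars Inl A) H) u = smul scale A (unflatten H u)"
  by (rule ext) (simp add: unflatten_def[abs_def] smul_subst_vars[OF assms inj_Inl] graft_Inl case_sum_o_inj)

lemma geom_prod_filter_Inl:
  fixes ps :: "(int \<times> ('a::finite + 'b::finite \<Rightarrow> nat)) list"
  assumes "admissible ps"
  obtains qs where "admissible qs"
    and "geom_prod L Linv (filter (\<lambda>(m, v). v \<circ> Inr = (\<lambda>_. 0)) ps) = subst_vars Inl (geom_prod L Linv qs)"
proof
  let ?ps = "filter (\<lambda>(m, v). v \<circ> Inr = (\<lambda>_. 0)) ps"
  let ?qs = "map (\<lambda>(m, v). (m, v \<circ> Inl)) ?ps"
  have restrict: "graft Inl (v \<circ> Inl) (\<lambda>_. 0) = v" if "v \<circ> Inr = (\<lambda>_. 0)" for v :: "'a + 'b \<Rightarrow> nat"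
    using that by (intro graft_comp_self) (auto simp: notin_range_Inl fun_eq_iff)
  have "v \<circ> Inl \<noteq> (\<lambda>_. 0)" if "v \<noteq> (\<lambda>_. 0)" "v \<circ> Inr = (\<lambda>_. 0)" for v :: "'a + 'b \<Rightarrow> nat"
  proof
    assume "v \<circ> Inl = (\<lambda>_. 0)"
    with that(2) have "v j = 0" for j by (cases j) (metis comp_apply)+
    with that(1) show False by blast
  qed
  then show "admissible ?qs"
    using assms by (auto simp: admissible_def)
  have restored: "map (\<lambda>(m, v). (m, graft Inl v (\<lambda>_. 0))) ?qs = ?ps"
    by (induct ps) (auto simp: restrict[unfolded comp_def])
  then show "geom_prod L Linv ?ps = subst_vars Inl (geom_prod L Linv ?qs)"
    by (simp only: subst_vars_geom_prod[OF inj_Inl \<open>admissible ?qs\<close>] restored)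
qed

lemma unflatten_in_int_series:
  fixes F :: "('a::finite + 'b::finite, 'm::ab_group_add) fseries"
  assumes "module scale" "F \<in> int_series scale L Linv UNIV"
  shows "unflatten F u \<in> int_series scale L Linv UNIV"
proof -
  obtain ps f where ps: "admissible ps" "is_poly f" "F = smul scale (geom_prod L Linv ps) f"
    using assms(2) unfolding int_series_UNIV_iff by blast
  define P where "P = (\<lambda>(m::int, v::'a + 'b \<Rightarrow> nat). v \<circ> Inr = (\<lambda>_. 0))"
  obtain qs where qs: "admissible qs" "geom_prod L Linv (filter P ps) = subst_vars Inl (geom_prod L Linv qs)"
    using geom_prod_filter_Inl[OF ps(1)] unfolding P_def by blast
  define H where "H = smul scale (geom_prod L Linv (filter (\<lambda>x. \<not> P x) ps)) f"
  have "F = smul scale (subst_vars Inl (geom_prod L Linv qs)) H"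
    by (simp add: ps(3) H_def qs(2)[symmetric] smul_rmul[OF assms(1), symmetric]
        geom_prod_filter[symmetric])
  then have "unflatten F u = smul scale (geom_prod L Linv qs) (unflatten H u)"
    by (simp add: unflatten_smul_subst_vars_Inl[OF assms(1)])
  moreover have "finite_fibres H"
    unfolding H_def
    by (intro finite_fibres_smul[OF assms(1)] finite_fibres_geom_prod is_poly_imp_finite_fibres ps(2))
       (auto simp: P_def)
  ultimately show ?thesis
    unfolding int_series_UNIV_iff using qs(1) is_poly_unflatten by blast
qed

theorem lemma5p2:
  fixes scale :: "'r::comm_ring_1 \<Rightarrow> 'm::ab_group_add \<Rightarrow> 'm"
    and L Linv :: 'r
  assumes "module scale"
    and "L * Linv = 1"
    and "\<And>n::nat. n \<ge> 1 \<Longrightarrow> \<exists>u. (1 - L ^ n) * u = 1"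
  shows "(\<forall>G :: ('b::finite, ('a::finite, 'm) fseries) fseries.
            G \<in> int_series (series_scale scale) L Linv (int_series scale L Linv UNIV)
            \<longrightarrow> flatten G \<in> int_series scale L Linv UNIV)
       \<and> (\<forall>F :: ('a + 'b, 'm) fseries. F \<in> int_series scale L Linv UNIV
            \<longrightarrow> (\<forall>u. unflatten F u \<in> int_series scale L Linv UNIV))"
  using flatten_in_int_series[OF assms(1)] unflatten_in_int_series[OF assms(1)] by blast

end
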